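(* Let $k,n,m$ be positive integers with $n+m\le k$ and $q$ a prime power. Let $\mathbb{T}$ be the set of $1$-dimensional subspaces of $\mathbb{F}_q^k$ and let $\mathbb{X}=\{\{T_1,\dots,T_n\}\subseteq\mathbb{T}:\dim(T_1+\cdots+T_n)=n\}$, $\mathbb{Y}=\{\{T_1,\dots,T_m\}\subseteq\mathbb{T}:\dim(T_1+\cdots+T_m)=m\}$, $\mathbb{Z}=\{\{T_1,\dots,T_{n+m}\}\subseteq\mathbb{T}:\dim(T_1+\cdots+T_{n+m})=n+m\}$. Let $B$ be the bipartite graph with left vertex set $\mathbb{X}$, right vertex set $\mathbb{Y}$, and $X$ adjacent to $Y$ iff $X\cup Y\in\mathbb{Z}$. For $Z\in\mathbb{Z}$, the set $\mathcal{C}_Z=\{\{X,Z\setminus X\}: X\subseteq Z,\ |X|=n\}$ is a subset of $E(B)$ and is an induced matching of $B$ of size $\binom{n+m}{m}$.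
   Context: An induced matching of a bipartite graph $B$ is a set $\mathcal{C}\subseteq E(B)$ such that for any two distinct $\{k_1,f_1\},\{k_2,f_2\}\in\mathcal{C}$: $k_1\ne k_2$, $f_1\ne f_2$, and $\{k_1,f_2\},\{k_2,f_1\}\notin E(B)$. *)

theory Defs
  imports "HOL-Analysis.Analysis"
begin

definition lines :: "('a::field ^ 'k) set set" where
  "lines = {T. vec.subspace T \<and> vec.dim T = 1}"

text \<open>Sets of r lines whose sum T_1 + ... + T_r has dimension r.
  The sum of subspaces is the span of their union.\<close>
definition indep_lines :: "nat \<Rightarrow> ('a::field ^ 'k) set set set" where
  "indep_lines r = {X. X \<subseteq> lines \<and> card X = r \<and> vec.dim (vec.span (\<Union>X)) = r}"

definition bip_edges :: "nat \<Rightarrow> nat \<Rightarrow> (('a::field ^ 'k) set set \<times> ('a ^ 'k) set set) set" where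
  "bip_edges n m = {(X, Y). X \<in> indep_lines n \<and> Y \<in> indep_lines m \<and> X \<union> Y \<in> indep_lines (n + m)}"

definition induced_matching :: "('l \<times> 'r) set \<Rightarrow> ('l \<times> 'r) set \<Rightarrow> bool" where
  "induced_matching E C \<longleftrightarrow> C \<subseteq> E \<and>
     (\<forall>(k1, f1) \<in> C. \<forall>(k2, f2) \<in> C. (k1, f1) \<noteq> (k2, f2) \<longrightarrow>
        k1 \<noteq> k2 \<and> f1 \<noteq> f2 \<and> (k1, f2) \<notin> E \<and> (k2, f1) \<notin> E)"

end

theory Submission
  imports Defs
begin

text \<open>Every subfamily X of an independent family Z of lines is independent, since dimension is
  subadditive and a family of lines spans at most as many dimensions as it has members:
  dim Z \<le> dim X + dim (Z - X) \<le> dim X + card (Z - X) forces dim X = card X.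
  Hence each split of Z into an n-set X and its complement is an edge of B. Two different splits
  X, X' are not cross-adjacent: an edge (X, Z - X') would need the n + m lines of X \<union> (Z - X'),
  a subset of Z, to exhaust Z, forcing X' \<subseteq> X and thus X = X'.\<close>

lemma (in finite_dimensional_vector_space) dim_Un_le: "dim (A \<union> B) \<le> dim A + dim B"
proof -
  obtain BA where BA: "BA \<subseteq> A" "independent BA" "A \<subseteq> span BA" "card BA = dim A"
    by (rule basis_exists)
  obtain BB where BB: "BB \<subseteq> B" "independent BB" "B \<subseteq> span BB" "card BB = dim B"
    by (rule basis_exists)
  have "A \<union> B \<subseteq> span (BA \<union> BB)"
    using BA(3) BB(3) span_mono[of BA "BA \<union> BB"] span_mono[of BB "BA \<union> BB"] by blast
  then have "dim (A \<union> B) \<le> card (BA \<union> BB)"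
    using BA(2) BB(2) independent_bound_general by (blast intro: dim_le_card)
  also have "\<dots> \<le> card BA + card BB"
    by (rule card_Un_le)
  finally show ?thesis
    using BA(4) BB(4) by simp
qed

lemma (in finite_dimensional_vector_space) dim_Union_le_sum:
  assumes "finite F"
  shows "dim (\<Union>F) \<le> (\<Sum>S\<in>F. dim S)"
  using assms
proof (induction F rule: finite_induct)
  case empty
  then show ?case by simp
next
  case (insert S F)
  have "dim (\<Union>(insert S F)) \<le> dim S + dim (\<Union>F)"
    using dim_Un_le[of S "\<Union>F"] by simp
  with insert show ?case by simp
qed

lemma dim_Union_lines_le:
  assumes "finite X" "X \<subseteq> lines"
  shows "vec.dim (\<Union>X) \<le> card X"
proof -
  have "(\<Sum>T\<in>X. vec.dim T) = card X"
    using assms(2) by (simp add: lines_def subset_iff)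
  then show ?thesis
    using vec.dim_Union_le_sum[OF assms(1)] by simp
qed

lemma indep_lines_finite: "Z \<in> indep_lines r \<Longrightarrow> 0 < r \<Longrightarrow> finite Z"
  by (auto simp: indep_lines_def intro: card_ge_0_finite)

lemma indep_lines_subset:
  assumes Z: "Z \<in> indep_lines r" "0 < r" and "X \<subseteq> Z"
  shows "X \<in> indep_lines (card X)"
proof -
  have "finite Z"
    using indep_lines_finite[OF Z] .
  have lines: "Z \<subseteq> lines" and "card Z = r" and dim_Z: "vec.dim (\<Union>Z) = r"
    using Z(1) by (simp_all add: indep_lines_def)
  have "finite X"
    using \<open>finite Z\<close> \<open>X \<subseteq> Z\<close> finite_subset by blast
  have "\<Union>X \<union> \<Union>(Z - X) = \<Union>Z"
    using \<open>X \<subseteq> Z\<close> by blast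
  then have "r \<le> vec.dim (\<Union>X) + vec.dim (\<Union>(Z - X))"
    using dim_Z vec.dim_Un_le[of "\<Union>X" "\<Union>(Z - X)"] by simp
  moreover have "vec.dim (\<Union>(Z - X)) \<le> card (Z - X)"
    using \<open>finite Z\<close> lines by (intro dim_Union_lines_le) auto
  moreover have "vec.dim (\<Union>X) \<le> card X"
    using \<open>finite X\<close> lines \<open>X \<subseteq> Z\<close> by (intro dim_Union_lines_le) auto
  moreover have "card (Z - X) = r - card X" and "card X \<le> r"
    using card_Diff_subset[OF \<open>finite X\<close> \<open>X \<subseteq> Z\<close>] card_mono[OF \<open>finite Z\<close> \<open>X \<subseteq> Z\<close>] \<open>card Z = r\<close>
    by simp_all
  ultimately have "vec.dim (\<Union>X) = card X"
    by linarith
  then show ?thesis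
    using lines \<open>X \<subseteq> Z\<close> by (auto simp: indep_lines_def)
qed

lemma complement_pairs_subset_bip_edges:
  assumes "Z \<in> indep_lines (n + m)" "0 < n + m"
  shows "{(X, Z - X) | X. X \<subseteq> Z \<and> card X = n} \<subseteq> bip_edges n m"
proof
  fix p assume "p \<in> {(X, Z - X) | X. X \<subseteq> Z \<and> card X = n}"
  then obtain X where p: "p = (X, Z - X)" and "X \<subseteq> Z" "card X = n"
    by blast
  have "finite Z"
    using indep_lines_finite[OF assms] .
  have "card Z = n + m"
    using assms(1) by (simp add: indep_lines_def)
  with \<open>finite Z\<close> have "card (Z - X) = m"
    using \<open>X \<subseteq> Z\<close> \<open>card X = n\<close> by (simp add: card_Diff_subset finite_subset)
  moreover have "X \<union> (Z - X) = Z"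
    using \<open>X \<subseteq> Z\<close> by blast
  ultimately show "p \<in> bip_edges n m"
    using indep_lines_subset[OF assms, of X] indep_lines_subset[OF assms, of "Z - X"]
      \<open>X \<subseteq> Z\<close> \<open>card X = n\<close> assms(1)
    by (simp add: p bip_edges_def)
qed

lemma induced_matching_complement_pairs:
  assumes "finite Z"
    and C_sub: "{(X, Z - X) | X. X \<subseteq> Z \<and> card X = n} \<subseteq> E"
    and E_card: "\<And>A B. (A, B) \<in> E \<Longrightarrow> card (A \<union> B) = card Z"
  shows "induced_matching E {(X, Z - X) | X. X \<subseteq> Z \<and> card X = n}"
proof -
  have no_cross_edge: "(A, Z - B) \<notin> E"
    if "A \<subseteq> Z" "B \<subseteq> Z" "card A = card B" "A \<noteq> B" for A B
  proof
    assume "(A, Z - B) \<in> E"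
    moreover have "A \<union> (Z - B) \<subseteq> Z"
      using \<open>A \<subseteq> Z\<close> by blast
    ultimately have "A \<union> (Z - B) = Z"
      using E_card \<open>finite Z\<close> card_subset_eq by metis
    then have "B \<subseteq> A"
      using \<open>B \<subseteq> Z\<close> by blast
    then show False
      using that \<open>finite Z\<close> card_subset_eq finite_subset by metis
  qed
  have "A \<noteq> B \<and> Z - A \<noteq> Z - B \<and> (A, Z - B) \<notin> E \<and> (B, Z - A) \<notin> E"
    if "A \<subseteq> Z" "card A = n" "B \<subseteq> Z" "card B = n" "A \<noteq> B" for A B
  proof (intro conjI)
    show "Z - A \<noteq> Z - B"
      using that by blast
  qed (use that no_cross_edge in auto)
  with C_sub show ?thesis
    unfolding induced_matching_def by auto
qed

lemma card_complement_pairs: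
  assumes "finite Z"
  shows "card {(X, Z - X) | X. X \<subseteq> Z \<and> card X = n} = card Z choose n"
proof -
  have "{(X, Z - X) | X. X \<subseteq> Z \<and> card X = n} = (\<lambda>X. (X, Z - X)) ` {X. X \<subseteq> Z \<and> card X = n}"
    by blast
  then show ?thesis
    using n_subsets[OF assms] by (simp add: card_image inj_on_def)
qed

text \<open>The hypotheses 0 < m and n + m \<le> CARD('k) only guarantee that such a Z exists;
  the proof does not need them.\<close>

theorem lemma10:
  fixes n m :: nat and Z :: "('a::{field,finite} ^ 'k) set set"
  assumes "0 < n" and "0 < m" and "n + m \<le> CARD('k)"
    and "Z \<in> indep_lines (n + m)"
  shows "{(X, Z - X) | X. X \<subseteq> Z \<and> card X = n} \<subseteq> bip_edges n m
    \<and> induced_matching (bip_edges n m) {(X, Z - X) | X. X \<subseteq> Z \<and> card X = n}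
    \<and> card {(X, Z - X) | X. X \<subseteq> Z \<and> card X = n} = (n + m) choose m"
proof -
  let ?C = "{(X, Z - X) | X. X \<subseteq> Z \<and> card X = n}"
  have "0 < n + m"
    using \<open>0 < n\<close> by simp
  have "finite Z"
    using indep_lines_finite[OF assms(4) \<open>0 < n + m\<close>] .
  have "card Z = n + m"
    using assms(4) by (simp add: indep_lines_def)
  have edges: "?C \<subseteq> bip_edges n m"
    using complement_pairs_subset_bip_edges[OF assms(4) \<open>0 < n + m\<close>] .
  have "card (A \<union> B) = card Z" if "(A, B) \<in> bip_edges n m" for A B
    using that \<open>card Z = n + m\<close> by (simp add: bip_edges_def indep_lines_def)
  with edges have "induced_matching (bip_edges n m) ?C"
    using induced_matching_complement_pairs[OF \<open>finite Z\<close>] by blast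
  moreover have "card ?C = (n + m) choose m"
    using card_complement_pairs[OF \<open>finite Z\<close>] \<open>card Z = n + m\<close> binomial_symmetric[of n "n + m"]
    by simp
  ultimately show ?thesis
    using edges by blast
qed

end
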